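(* Let $\Sigma_0$ be an $n\times n$ symmetric positive definite matrix and apply the MRA-lp procedure (described in the context) to $\Sigma_0$. Suppose that for every $m\in\{1,\dots,M\}$ and every multi-index $(j_1,\dots,j_m)$, the matrix $\Phi_{j_1,\dots,j_m}$ satisfies $$\mathrm{R}\big(\Phi_{j_1,\dots,j_m}^{\top}\big)\cap \mathrm{R}\big(V^m_{j_1,\dots,j_m}\big)^{\perp}=\{\mathbf 0\},$$ where $\mathrm{R}(\cdot)$ denotes column space and $\perp$ the orthogonal complement (the condition being imposed at each step $m$ once $V^m_{j_1,\dots,j_m}$ has been formed). Then the procedure is well defined, $V^m_{j_1,\dots,j_m}$ is positive semidefinite for all $m=1,\dots,M$ and all multi-indices, and $\widehat V^m_{j_1,\dots,j_m}$ is positive definite for all $m=0,\dots,M$ and all multi-indices (so that $(\widehat V^m_{j_1,\dots,j_m})^{-1}$ and $(\widehat V^m_{j_1,\dots,j_m})^{-1/2}$ exist).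
   Context: Let $n\ge 1$ and $I_0=\{1,\dots,n\}$ index grid points. Fix $M\ge 0$ and integers $J_1,\dots,J_M\ge 2$. For $m\in\{0,\dots,M\}$ a multi-index is $(j_1,\dots,j_m)$ with $1\le j_i\le J_i$; for $m=0$ it is the empty multi-index, written $0$. Index sets $I_{j_1,\dots,j_m}\subseteq I_0$ are given with $I_0$ at $m=0$ and, for $m<M$, $I_{j_1,\dots,j_m}$ equal to the disjoint union of $I_{j_1,\dots,j_m,j_{m+1}}$ over $j_{m+1}=1,\dots,J_{m+1}$. Indices are ordered so that if $(j_1,\dots,j_M)$ is lexicographically greater than $(i_1,\dots,i_M)$ then $\min I_{j_1,\dots,j_M}>\max I_{i_1,\dots,i_M}$. Knot sets $K_{j_1,\dots,j_m}\subseteq I_{j_1,\dots,j_m}$ have $r_{j_1,\dots,j_m}$ elements. For each multi-index, $\Phi_{j_1,\dots,j_m}$ is a real $r'_{j_1,\dots,j_m}\times r_{j_1,\dots,j_m}$ matrix of rank $r'_{j_1,\dots,j_m}$ ($1\le r'_{j_1,\dots,j_m}\le r_{j_1,\dots,j_m}$) whose rows have Euclidean norm 1. For a matrix $C$ and index sets $A,A'$, $C[A,A']$ is the submatrix with rows in $A$ and columns in $A'$ (in increasing order). For a positive definite $S$, $S^{-1/2}$ is the inverse of its symmetric positive definite square root. MRA-lp procedure applied to an $n\times n$ symmetric positive definite $\Sigma_0$: (i) $W^0_0=\Sigma_0[I_0,K_0]$, $V^0_0=\Sigma_0[K_0,K_0]$, $\widehat V^0_0=\Phi_0V^0_0\Phi_0^\top$,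 $B_0=W^0_0\Phi_0^\top(\widehat V^0_0)^{-1/2}$. (ii) For $0\le k<m\le M$, $W^k_{j_1,\dots,j_m}$ is obtained from $W^k_{j_1,\dots,j_k}$ (whose rows are indexed by $I_{j_1,\dots,j_k}$) by keeping the rows in $I_{j_1,\dots,j_m}$, and $V^k_{j_1,\dots,j_m}$ by keeping the rows in $K_{j_1,\dots,j_m}$. (iii) For $m=1,\dots,M$ recursively: $W^m_{j_1,\dots,j_m}=\Sigma_0[I_{j_1,\dots,j_m},K_{j_1,\dots,j_m}]-\sum_{k=0}^{m-1}W^k_{j_1,\dots,j_m}\Phi_{j_1,\dots,j_k}^\top(\widehat V^k_{j_1,\dots,j_k})^{-1}\Phi_{j_1,\dots,j_k}(V^k_{j_1,\dots,j_m})^\top$; $V^m_{j_1,\dots,j_m}$ = rows of $W^m_{j_1,\dots,j_m}$ indexed by $K_{j_1,\dots,j_m}$; $\widehat V^m_{j_1,\dots,j_m}=\Phi_{j_1,\dots,j_m}V^m_{j_1,\dots,j_m}\Phi_{j_1,\dots,j_m}^\top$; $B_{j_1,\dots,j_m}=W^m_{j_1,\dots,j_m}\Phi_{j_1,\dots,j_m}^\top(\widehat V^m_{j_1,\dots,j_m})^{-1/2}$. (iv) Output $B=(B^M\;B^{M-1}\;\cdots\;B^0)$, where $B^m$ is the $n$-row block diagonal matrix with diagonal blocks $B_{j_1,\dots,j_m}$ arranged in lexicographic order of $(j_1,\dots,j_m)$ (block $B_{j_1,\dots,j_m}$ occupying rows $I_{j_1,\dots,j_m}$). *)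

theory Defs
  imports Complex_Main
begin

text \<open>A matrix is a function nat => nat => real, considered only on
explicit row/column index sets. Matrices whose rows/columns are indexed by a
subset D of the grid points (e.g. the knot set K) are indexed by the elements of
D themselves (this is the submatrix in increasing order, up to the order-preserving
bijection). Matrices with r' rows (Phi, Vhat) use row indices 0..<r'.
A multi-index (j_1,...,j_m) is the list [j_1,...,j_m]; the empty multi-index is [].\<close>

definition midx :: "(nat \<Rightarrow> nat) \<Rightarrow> nat \<Rightarrow> nat list set" where
  "midx J m = {js. length js = m \<and> (\<forall>i<m. 1 \<le> js ! i \<and> js ! i \<le> J (Suc i))}"

definition sym_on :: "nat set \<Rightarrow> (nat \<Rightarrow> nat \<Rightarrow> real) \<Rightarrow> bool" where
  "sym_on D A = (\<forall>i\<in>D. \<forall>j\<in>D. A i j = A j i)"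

definition quad_form :: "nat set \<Rightarrow> (nat \<Rightarrow> nat \<Rightarrow> real) \<Rightarrow> (nat \<Rightarrow> real) \<Rightarrow> real" where
  "quad_form D A x = (\<Sum>i\<in>D. \<Sum>j\<in>D. x i * A i j * x j)"

definition psd_on :: "nat set \<Rightarrow> (nat \<Rightarrow> nat \<Rightarrow> real) \<Rightarrow> bool" where
  "psd_on D A = (sym_on D A \<and> (\<forall>x. quad_form D A x \<ge> 0))"

definition pd_on :: "nat set \<Rightarrow> (nat \<Rightarrow> nat \<Rightarrow> real) \<Rightarrow> bool" where
  "pd_on D A = (sym_on D A \<and> (\<forall>x. (\<exists>i\<in>D. x i \<noteq> 0) \<longrightarrow> quad_form D A x > 0))"

definition vecs :: "nat set \<Rightarrow> (nat \<Rightarrow> real) set" where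
  "vecs D = {x. \<forall>i. i \<notin> D \<longrightarrow> x i = 0}"

definition col_space :: "(nat \<Rightarrow> nat \<Rightarrow> real) \<Rightarrow> nat set \<Rightarrow> nat set \<Rightarrow> (nat \<Rightarrow> real) set" where
  "col_space A R C = {x \<in> vecs R. \<exists>y \<in> vecs C. \<forall>i\<in>R. x i = (\<Sum>c\<in>C. A i c * y c)}"

definition ortho_compl :: "nat set \<Rightarrow> (nat \<Rightarrow> real) set \<Rightarrow> (nat \<Rightarrow> real) set" where
  "ortho_compl D S = {x \<in> vecs D. \<forall>s\<in>S. (\<Sum>i\<in>D. x i * s i) = 0}"

text \<open>matrix inverse on {0..<d} (total: zero matrix if no inverse exists)\<close>
definition is_inv :: "nat \<Rightarrow> (nat \<Rightarrow> nat \<Rightarrow> real) \<Rightarrow> (nat \<Rightarrow> nat \<Rightarrow> real) \<Rightarrow> bool" where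
  "is_inv d A B = (\<forall>p<d. \<forall>q<d.
      (\<Sum>t<d. A p t * B t q) = (if p = q then 1 else 0) \<and>
      (\<Sum>t<d. B p t * A t q) = (if p = q then 1 else 0))"

definition minv :: "nat \<Rightarrow> (nat \<Rightarrow> nat \<Rightarrow> real) \<Rightarrow> (nat \<Rightarrow> nat \<Rightarrow> real)" where
  "minv d A = (if \<exists>B. is_inv d A B then (SOME B. is_inv d A B) else (\<lambda>_ _. 0))"

text \<open>Vhat = Phi V Phi^T, where V = rows of W indexed by K (columns of W are indexed by K)\<close>
definition vhat :: "(nat list \<Rightarrow> nat set) \<Rightarrow> (nat list \<Rightarrow> nat \<Rightarrow> nat \<Rightarrow> real)
    \<Rightarrow> (nat \<Rightarrow> nat \<Rightarrow> real) \<Rightarrow> nat list \<Rightarrow> nat \<Rightarrow> nat \<Rightarrow> real" where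
  "vhat K Phi W js p q = (\<Sum>a\<in>K js. \<Sum>b\<in>K js. Phi js p a * W a b * Phi js q b)"

text \<open>correction term  W^k Phi^T (Vhat^k)^(-1) Phi (V^k)^T  contributed by the prefix pre
  (entry (i,l): row i, column l)\<close>
definition corr :: "(nat list \<Rightarrow> nat set) \<Rightarrow> (nat list \<Rightarrow> nat \<Rightarrow> nat \<Rightarrow> real) \<Rightarrow> (nat list \<Rightarrow> nat)
    \<Rightarrow> (nat \<Rightarrow> nat \<Rightarrow> real) \<Rightarrow> nat list \<Rightarrow> nat \<Rightarrow> nat \<Rightarrow> real" where
  "corr K Phi rp W pre i l =
     (let Vi = minv (rp pre) (vhat K Phi W pre) in
      \<Sum>a\<in>K pre. \<Sum>b\<in>K pre.
        W i a * (\<Sum>p<rp pre. \<Sum>q<rp pre. Phi pre p a * Vi p q * Phi pre q b) * W l b)"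

text \<open>Wtab m js = W^{|js|}_{js} for all multi-indices of length at most m\<close>
primrec Wtab :: "(nat \<Rightarrow> nat \<Rightarrow> real) \<Rightarrow> (nat list \<Rightarrow> nat set) \<Rightarrow> (nat list \<Rightarrow> nat \<Rightarrow> nat \<Rightarrow> real)
    \<Rightarrow> (nat list \<Rightarrow> nat) \<Rightarrow> nat \<Rightarrow> nat list \<Rightarrow> nat \<Rightarrow> nat \<Rightarrow> real" where
  "Wtab S K Phi rp 0 = (\<lambda>js. S)"
| "Wtab S K Phi rp (Suc m) = (\<lambda>js.
     if length js \<le> m then Wtab S K Phi rp m js
     else (\<lambda>i l. S i l - (\<Sum>k<length js.
              corr K Phi rp (Wtab S K Phi rp m (take k js)) (take k js) i l)))"

text \<open>MRA-lp: W^m_{js} (rows: grid points in I_js, columns: knots K_js);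
  V^m_{js} is the same function restricted to rows in K_js; Vhat^m_{js}.\<close>
definition mraW :: "(nat \<Rightarrow> nat \<Rightarrow> real) \<Rightarrow> (nat list \<Rightarrow> nat set) \<Rightarrow> (nat list \<Rightarrow> nat \<Rightarrow> nat \<Rightarrow> real)
    \<Rightarrow> (nat list \<Rightarrow> nat) \<Rightarrow> nat list \<Rightarrow> nat \<Rightarrow> nat \<Rightarrow> real" where
  "mraW S K Phi rp js = Wtab S K Phi rp (length js) js"

definition mraVhat :: "(nat \<Rightarrow> nat \<Rightarrow> real) \<Rightarrow> (nat list \<Rightarrow> nat set) \<Rightarrow> (nat list \<Rightarrow> nat \<Rightarrow> nat \<Rightarrow> real)
    \<Rightarrow> (nat list \<Rightarrow> nat) \<Rightarrow> nat list \<Rightarrow> nat \<Rightarrow> nat \<Rightarrow> real" where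
  "mraVhat S K Phi rp js = vhat K Phi (mraW S K Phi rp js) js"

end

theory Submission
  imports Defs "Jordan_Normal_Form.Determinant"
begin

text \<open>The correction subtracted at each level of the recursion is a Schur complement:
  if \<open>C\<close> is positive semidefinite and \<open>V = \<Phi> C[K,K] \<Phi>\<^sup>T\<close> is invertible, then
  \<open>C - C[\<cdot>,K] \<Phi>\<^sup>T V\<^sup>-\<^sup>1 \<Phi> C[K,\<cdot>]\<close> is again positive semidefinite, because its quadratic form
  at \<open>x\<close> equals that of \<open>C\<close> at \<open>x - y\<close> for a suitable \<open>y\<close> supported on \<open>K\<close>. By induction
  over the levels every \<open>W\<^sup>m\<close> is therefore positive semidefinite, and so is its
  restriction \<open>V\<^sup>m\<close> to the knots. Then \<open>\<Phi> V\<^sup>m \<Phi>\<^sup>T\<close> is positive semidefinite, and a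
  vector \<open>\<Phi>\<^sup>T y\<close> with vanishing quadratic form lies in the orthogonal complement of the
  range of \<open>V\<^sup>m\<close>; the range condition forces it to be zero and the full row rank of
  \<open>\<Phi>\<close> forces \<open>y = 0\<close>. At the root, positive definiteness of \<open>\<Sigma>\<^sub>0\<close> plays the role of the
  range condition.\<close>

lemma nonneg_quadratic_imp_linear_coeff_zero:
  fixes a b :: real
  assumes nonneg: "\<And>t. 0 \<le> t\<^sup>2 * a - 2 * t * b"
  shows "b = 0"
proof (cases "a = 0")
  case True
  have "b\<^sup>2 \<le> 0" using nonneg[of b] True by (simp add: power2_eq_square)
  then show ?thesis by simp
next
  case False
  have "0 \<le> (b / a)\<^sup>2 * a - 2 * (b / a) * b" by (rule nonneg)
  also have "\<dots> = - (b\<^sup>2 / a)" using False by (simp add: power2_eq_square field_simps)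
  finally have "b\<^sup>2 / a \<le> 0" by simp
  moreover have "0 \<le> a" using nonneg[of 1] nonneg[of "-1"] by simp
  ultimately show ?thesis using False by (simp add: divide_le_0_iff)
qed

lemma sum_swap_outer_pairs:
  "(\<Sum>a\<in>A. \<Sum>b\<in>B. \<Sum>i\<in>I. \<Sum>l\<in>L. f a b i l) = (\<Sum>i\<in>I. \<Sum>l\<in>L. \<Sum>a\<in>A. \<Sum>b\<in>B. f a b i l)"
proof -
  have "(\<Sum>a\<in>A. \<Sum>b\<in>B. \<Sum>i\<in>I. \<Sum>l\<in>L. f a b i l) = (\<Sum>a\<in>A. \<Sum>i\<in>I. \<Sum>b\<in>B. \<Sum>l\<in>L. f a b i l)"
    by (intro sum.cong refl) (rule sum.swap)
  also have "\<dots> = (\<Sum>i\<in>I. \<Sum>a\<in>A. \<Sum>l\<in>L. \<Sum>b\<in>B. f a b i l)"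
    by (subst sum.swap) (intro sum.cong refl sum.swap)
  also have "\<dots> = (\<Sum>i\<in>I. \<Sum>l\<in>L. \<Sum>a\<in>A. \<Sum>b\<in>B. f a b i l)"
    by (intro sum.cong refl) (rule sum.swap)
  finally show ?thesis .
qed

subsection \<open>Quadratic forms on index sets\<close>

lemma quad_form_diff:
  assumes "sym_on D C"
  shows "quad_form D C (\<lambda>i. x i - y i)
    = quad_form D C x - 2 * (\<Sum>i\<in>D. \<Sum>j\<in>D. y i * C i j * x j) + quad_form D C y"
proof -
  have "(\<Sum>i\<in>D. \<Sum>j\<in>D. x i * C i j * y j) = (\<Sum>j\<in>D. \<Sum>i\<in>D. x i * C i j * y j)"
    by (rule sum.swap)
  also have "\<dots> = (\<Sum>i\<in>D. \<Sum>j\<in>D. y i * C i j * x j)"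
    using assms unfolding sym_on_def by (intro sum.cong refl) (auto simp: mult_ac)
  finally have "(\<Sum>i\<in>D. \<Sum>j\<in>D. x i * C i j * y j) = (\<Sum>i\<in>D. \<Sum>j\<in>D. y i * C i j * x j)" .
  then show ?thesis
    unfolding quad_form_def by (simp add: algebra_simps sum.distrib sum_subtractf)
qed

lemma quad_form_extend_by_zero:
  assumes "finite D" and "K \<subseteq> D"
  shows "quad_form D W (\<lambda>i. if i \<in> K then x i else 0) = quad_form K W x"
proof -
  have "quad_form D W (\<lambda>i. if i \<in> K then x i else 0)
      = (\<Sum>i\<in>K. \<Sum>j\<in>D. (if i \<in> K then x i else 0) * W i j * (if j \<in> K then x j else 0))"
    unfolding quad_form_def by (rule sum.mono_neutral_right[OF assms]) auto
  also have "\<dots> = (\<Sum>i\<in>K. \<Sum>j\<in>K. (if i \<in> K then x i else 0) * W i j * (if j \<in> K then x j else 0))"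
    by (intro sum.cong refl sum.mono_neutral_right[OF assms]) auto
  also have "\<dots> = quad_form K W x" unfolding quad_form_def by (intro sum.cong refl) auto
  finally show ?thesis .
qed

lemma quad_form_congruence:
  "quad_form A (\<lambda>i l. \<Sum>a\<in>B. \<Sum>b\<in>B. P i a * G a b * P l b) x
    = quad_form B G (\<lambda>a. \<Sum>i\<in>A. x i * P i a)"
proof -
  have "quad_form A (\<lambda>i l. \<Sum>a\<in>B. \<Sum>b\<in>B. P i a * G a b * P l b) x
      = (\<Sum>i\<in>A. \<Sum>l\<in>A. \<Sum>a\<in>B. \<Sum>b\<in>B. (x i * P i a) * G a b * (x l * P l b))"
    unfolding quad_form_def by (simp add: sum_distrib_left mult_ac)
  also have "\<dots> = (\<Sum>a\<in>B. \<Sum>b\<in>B. \<Sum>i\<in>A. \<Sum>l\<in>A. (x i * P i a) * G a b * (x l * P l b))"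
    by (rule sum_swap_outer_pairs)
  also have "\<dots> = quad_form B G (\<lambda>a. \<Sum>i\<in>A. x i * P i a)"
    unfolding quad_form_def by (simp add: sum_distrib_left sum_distrib_right mult_ac)
  finally show ?thesis .
qed

lemma sym_on_congruence:
  assumes "sym_on B G"
  shows "sym_on A (\<lambda>i l. \<Sum>a\<in>B. \<Sum>b\<in>B. P i a * G a b * P l b)"
  unfolding sym_on_def
proof (intro ballI)
  fix i l
  have "(\<Sum>a\<in>B. \<Sum>b\<in>B. P i a * G a b * P l b) = (\<Sum>b\<in>B. \<Sum>a\<in>B. P i a * G a b * P l b)"
    by (rule sum.swap)
  also have "\<dots> = (\<Sum>a\<in>B. \<Sum>b\<in>B. P l a * G a b * P i b)"
    using assms unfolding sym_on_def by (intro sum.cong refl) (auto simp: mult_ac)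
  finally show "(\<Sum>a\<in>B. \<Sum>b\<in>B. P i a * G a b * P l b) = (\<Sum>a\<in>B. \<Sum>b\<in>B. P l a * G a b * P i b)" .
qed

lemma pd_on_imp_psd_on:
  assumes "pd_on D W"
  shows "psd_on D W"
proof -
  have "0 \<le> quad_form D W x" for x
  proof (cases "\<exists>i\<in>D. x i \<noteq> 0")
    case True
    then show ?thesis using assms unfolding pd_on_def by force
  next
    case False
    then show ?thesis unfolding quad_form_def by simp
  qed
  then show ?thesis using assms unfolding pd_on_def psd_on_def by blast
qed

lemma psd_on_subset:
  assumes "finite D" "K \<subseteq> D" "psd_on D W"
  shows "psd_on K W"
  unfolding psd_on_def
proof (intro conjI allI)
  have "sym_on D W" using assms(3) unfolding psd_on_def by simp
  then show "sym_on K W" using assms(2) unfolding sym_on_def by blast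
  show "0 \<le> quad_form K W x" for x
  proof -
    have "0 \<le> quad_form D W (\<lambda>i. if i \<in> K then x i else 0)"
      using assms(3) unfolding psd_on_def by blast
    then show ?thesis using quad_form_extend_by_zero[OF assms(1,2)] by simp
  qed
qed

lemma pd_on_subset:
  assumes "finite D" "K \<subseteq> D" "pd_on D W"
  shows "pd_on K W"
  unfolding pd_on_def
proof (intro conjI allI impI)
  have "sym_on D W" using assms(3) unfolding pd_on_def by simp
  then show "sym_on K W" using assms(2) unfolding sym_on_def by blast
  fix x :: "nat \<Rightarrow> real" assume "\<exists>i\<in>K. x i \<noteq> 0"
  define z where "z = (\<lambda>i. if i \<in> K then x i else 0)"
  have "\<exists>i\<in>D. z i \<noteq> 0" using \<open>\<exists>i\<in>K. x i \<noteq> 0\<close> assms(2) unfolding z_def by auto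
  then have "0 < quad_form D W z" using assms(3) unfolding pd_on_def by blast
  then show "0 < quad_form K W x" using quad_form_extend_by_zero[OF assms(1,2)] unfolding z_def by simp
qed

lemma psd_on_bilinear_eq_0:
  assumes psd: "psd_on K W" and zero: "quad_form K W x = 0"
  shows "(\<Sum>i\<in>K. \<Sum>j\<in>K. x i * W i j * y j) = 0"
proof -
  have sym: "sym_on K W" using psd unfolding psd_on_def by simp
  define b where "b = (\<Sum>i\<in>K. \<Sum>j\<in>K. y i * W i j * x j)"
  have "0 \<le> t\<^sup>2 * quad_form K W y - 2 * t * b" for t
  proof -
    have "0 \<le> quad_form K W (\<lambda>i. x i - t * y i)" using psd unfolding psd_on_def by simp
    also have "\<dots> = - 2 * (\<Sum>i\<in>K. \<Sum>j\<in>K. (t * y i) * W i j * x j) + quad_form K W (\<lambda>i. t * y i)"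
      using quad_form_diff[OF sym] zero by simp
    also have "\<dots> = t\<^sup>2 * quad_form K W y - 2 * t * b"
      unfolding b_def quad_form_def by (simp add: sum_distrib_left mult_ac power2_eq_square sum_negf)
    finally show ?thesis .
  qed
  then have "b = 0" by (rule nonneg_quadratic_imp_linear_coeff_zero)
  have "(\<Sum>i\<in>K. \<Sum>j\<in>K. x i * W i j * y j) = (\<Sum>j\<in>K. \<Sum>i\<in>K. x i * W i j * y j)"
    by (rule sum.swap)
  also have "\<dots> = b"
    unfolding b_def using sym unfolding sym_on_def by (intro sum.cong refl) (auto simp: mult_ac)
  finally show ?thesis using \<open>b = 0\<close> by simp
qed

lemma psd_on_quad_form_eq_0_imp_ortho_compl:
  assumes "psd_on K W" "x \<in> vecs K" "quad_form K W x = 0"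
  shows "x \<in> ortho_compl K (col_space W K K)"
  unfolding ortho_compl_def
proof (intro CollectI conjI ballI \<open>x \<in> vecs K\<close>)
  fix s assume "s \<in> col_space W K K"
  then obtain y where s: "\<forall>i\<in>K. s i = (\<Sum>c\<in>K. W i c * y c)"
    unfolding col_space_def by blast
  have "(\<Sum>i\<in>K. x i * s i) = (\<Sum>i\<in>K. \<Sum>c\<in>K. x i * W i c * y c)"
    using s by (intro sum.cong refl) (auto simp: sum_distrib_left mult_ac)
  also have "\<dots> = 0" using psd_on_bilinear_eq_0[OF assms(1,3)] .
  finally show "(\<Sum>i\<in>K. x i * s i) = 0" .
qed

lemma pd_on_congruence:
  assumes psd: "psd_on K W"
    and rank: "\<And>y. \<forall>l\<in>K. (\<Sum>p<r. y p * Ph p l) = 0 \<Longrightarrow> \<forall>p<r. y p = 0"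
    and nondeg: "\<And>x. x \<in> col_space (\<lambda>l p. Ph p l) K {..<r} \<Longrightarrow> quad_form K W x = 0
      \<Longrightarrow> \<forall>l\<in>K. x l = 0"
  shows "pd_on {..<r} (\<lambda>p q. \<Sum>a\<in>K. \<Sum>b\<in>K. Ph p a * W a b * Ph q b)"
  unfolding pd_on_def
proof (intro conjI allI impI)
  show "sym_on {..<r} (\<lambda>p q. \<Sum>a\<in>K. \<Sum>b\<in>K. Ph p a * W a b * Ph q b)"
    using psd unfolding psd_on_def by (simp add: sym_on_congruence)
  fix y :: "nat \<Rightarrow> real" assume "\<exists>p\<in>{..<r}. y p \<noteq> 0"
  define x where "x = (\<lambda>l. if l \<in> K then \<Sum>p<r. y p * Ph p l else 0)"
  have "x \<in> col_space (\<lambda>l p. Ph p l) K {..<r}"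
    unfolding col_space_def vecs_def x_def
    by (intro CollectI conjI bexI[of _ "\<lambda>p. if p < r then y p else 0"])
      (auto simp: mult.commute intro!: sum.cong)
  moreover have "\<not> (\<forall>l\<in>K. x l = 0)"
    using rank \<open>\<exists>p\<in>{..<r}. y p \<noteq> 0\<close> unfolding x_def by auto
  ultimately have "quad_form K W x \<noteq> 0" using nondeg by blast
  moreover have "quad_form K W x = quad_form {..<r} (\<lambda>p q. \<Sum>a\<in>K. \<Sum>b\<in>K. Ph p a * W a b * Ph q b) y"
    unfolding quad_form_congruence x_def quad_form_def by (intro sum.cong refl) auto
  ultimately show "0 < quad_form {..<r} (\<lambda>p q. \<Sum>a\<in>K. \<Sum>b\<in>K. Ph p a * W a b * Ph q b) y"
    using psd unfolding psd_on_def by (metis order_le_less)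
qed

subsection \<open>Inverses of positive definite matrices\<close>

lemma pd_on_has_inverse:
  assumes pd: "pd_on {..<d} A"
  shows "\<exists>B. is_inv d A B"
proof -
  define Am where "Am = mat d d (\<lambda>(p, q). A p q)"
  have Am: "Am \<in> carrier_mat d d" unfolding Am_def by simp
  have "det Am \<noteq> 0"
  proof
    assume "det Am = 0"
    then obtain v where v: "v \<in> carrier_vec d" "v \<noteq> 0\<^sub>v d" "Am *\<^sub>v v = 0\<^sub>v d"
      using det_0_iff_vec_prod_zero_field[OF Am] by blast
    obtain p where "p < d" "v $ p \<noteq> 0"
      using v(1,2) by (metis eq_vecI carrier_vecD index_zero_vec(1,2))
    have "(\<Sum>j<d. A i j * v $ j) = 0" if "i < d" for i
      using arg_cong[OF v(3), of "\<lambda>w. w $ i"] that v(1) unfolding Am_def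
      by (simp add: scalar_prod_def lessThan_atLeast0 mult.commute)
    then have "quad_form {..<d} A (\<lambda>i. v $ i) = 0"
      unfolding quad_form_def by (simp add: mult.assoc flip: sum_distrib_left)
    moreover have "quad_form {..<d} A (\<lambda>i. v $ i) > 0"
      using pd \<open>p < d\<close> \<open>v $ p \<noteq> 0\<close> unfolding pd_on_def by auto
    ultimately show False by simp
  qed
  then obtain B where B: "B \<in> carrier_mat d d" "B * Am = 1\<^sub>m d" "Am * B = 1\<^sub>m d"
    using det_non_zero_imp_unit[OF Am] unfolding Units_def ring_mat_def by auto
  have "is_inv d A (\<lambda>p q. B $$ (p, q))"
    unfolding is_inv_def
  proof (intro allI impI conjI)
    fix p q assume pq: "p < d" "q < d"
    show "(\<Sum>t<d. A p t * B $$ (t, q)) = (if p = q then 1 else 0)"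
      using arg_cong[OF B(3), of "\<lambda>M. M $$ (p, q)"] pq B(1) unfolding Am_def
      by (simp add: scalar_prod_def lessThan_atLeast0)
    show "(\<Sum>t<d. B $$ (p, t) * A t q) = (if p = q then 1 else 0)"
      using arg_cong[OF B(2), of "\<lambda>M. M $$ (p, q)"] pq B(1) unfolding Am_def
      by (simp add: scalar_prod_def lessThan_atLeast0)
  qed
  then show ?thesis by blast
qed

lemma is_inv_minv: "pd_on {..<d} A \<Longrightarrow> is_inv d A (minv d A)"
  unfolding minv_def using pd_on_has_inverse someI_ex[of "is_inv d A"] by auto

lemma sym_on_inverse:
  assumes inv: "is_inv d A B" and sym: "sym_on {..<d} A"
  shows "sym_on {..<d} B"
  unfolding sym_on_def
proof (intro ballI)
  fix p q assume "p \<in> {..<d}" "q \<in> {..<d}"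
  then have pq: "p < d" "q < d" by auto
  have "B q p = (\<Sum>s<d. (\<Sum>t<d. B t q * A t s) * B s p)"
  proof -
    have "(\<Sum>t<d. B t q * A t s) = (if s = q then 1 else 0)" if "s < d" for s
    proof -
      have "(\<Sum>t<d. B t q * A t s) = (\<Sum>t<d. A s t * B t q)"
        using sym that unfolding sym_on_def by (intro sum.cong) (auto simp: mult.commute)
      then show ?thesis using inv that pq unfolding is_inv_def by auto
    qed
    then show ?thesis using pq(2) by (simp add: if_distrib[of "\<lambda>x. x * _"] sum.delta cong: if_cong)
  qed
  also have "\<dots> = (\<Sum>t<d. B t q * (\<Sum>s<d. A t s * B s p))"
    by (simp add: sum_distrib_left sum_distrib_right mult.assoc) (rule sum.swap)
  also have "\<dots> = B p q"
    using inv pq unfolding is_inv_def by (simp add: if_distrib[of "(*) _"] sum.delta' cong: if_cong)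
  finally show "B p q = B q p" by simp
qed

lemma is_inv_quad_form:
  assumes "is_inv d A B"
  shows "quad_form {..<d} A (\<lambda>p. \<Sum>q<d. B p q * v q) = quad_form {..<d} B v"
proof -
  have "(\<Sum>q<d. A p q * (\<Sum>s<d. B q s * v s)) = v p" if "p < d" for p
  proof -
    have "(\<Sum>q<d. A p q * (\<Sum>s<d. B q s * v s)) = (\<Sum>s<d. (\<Sum>q<d. A p q * B q s) * v s)"
      by (simp add: sum_distrib_left sum_distrib_right mult_ac) (rule sum.swap)
    also have "\<dots> = v p"
      using assms that unfolding is_inv_def
      by (simp add: if_distrib[of "\<lambda>x. x * _"] sum.delta cong: if_cong)
    finally show ?thesis .
  qed
  then have "quad_form {..<d} A (\<lambda>p. \<Sum>q<d. B p q * v q) = (\<Sum>p<d. (\<Sum>q<d. B p q * v q) * v p)"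
    unfolding quad_form_def by (simp add: mult.assoc flip: sum_distrib_left)
  also have "\<dots> = quad_form {..<d} B v"
    unfolding quad_form_def by (simp add: sum_distrib_left sum_distrib_right mult_ac)
  finally show ?thesis .
qed

subsection \<open>The Schur complement step\<close>

lemma psd_on_cross_term_bound:
  assumes fin: "finite D" and KD: "K \<subseteq> D" and psd: "psd_on D C"
  shows "2 * (\<Sum>p<r. u p * (\<Sum>a\<in>K. (\<Sum>i\<in>D. x i * C i a) * Ph p a))
    \<le> quad_form D C x + quad_form {..<r} (\<lambda>p q. \<Sum>a\<in>K. \<Sum>b\<in>K. Ph p a * C a b * Ph q b) u"
proof -
  have sym: "sym_on D C" using psd unfolding psd_on_def by simp
  define y where "y = (\<lambda>i. if i \<in> K then \<Sum>p<r. u p * Ph p i else 0)"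
  have "(\<Sum>i\<in>D. \<Sum>j\<in>D. y i * C i j * x j) = (\<Sum>a\<in>K. \<Sum>j\<in>D. y a * C a j * x j)"
    by (rule sum.mono_neutral_right[OF fin KD]) (auto simp: y_def)
  also have "\<dots> = (\<Sum>a\<in>K. (\<Sum>p<r. u p * Ph p a) * (\<Sum>i\<in>D. x i * C i a))"
  proof (intro sum.cong refl)
    fix a assume "a \<in> K"
    then have "C a j = C j a" if "j \<in> D" for j using sym KD that unfolding sym_on_def by auto
    then show "(\<Sum>j\<in>D. y a * C a j * x j) = (\<Sum>p<r. u p * Ph p a) * (\<Sum>i\<in>D. x i * C i a)"
      using \<open>a \<in> K\<close> unfolding y_def sum_distrib_left by (auto simp: mult_ac intro!: sum.cong)
  qed
  also have "\<dots> = (\<Sum>p<r. u p * (\<Sum>a\<in>K. (\<Sum>i\<in>D. x i * C i a) * Ph p a))"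
    by (simp add: sum_distrib_left sum_distrib_right mult_ac) (rule sum.swap)
  finally have cross: "(\<Sum>i\<in>D. \<Sum>j\<in>D. y i * C i j * x j)
      = (\<Sum>p<r. u p * (\<Sum>a\<in>K. (\<Sum>i\<in>D. x i * C i a) * Ph p a))" .
  have "quad_form D C y = quad_form K C (\<lambda>a. \<Sum>p<r. u p * Ph p a)"
    unfolding y_def by (rule quad_form_extend_by_zero[OF fin KD])
  also have "\<dots> = quad_form {..<r} (\<lambda>p q. \<Sum>a\<in>K. \<Sum>b\<in>K. Ph p a * C a b * Ph q b) u"
    by (simp only: quad_form_congruence)
  finally have "quad_form D C y = quad_form {..<r} (\<lambda>p q. \<Sum>a\<in>K. \<Sum>b\<in>K. Ph p a * C a b * Ph q b) u" .
  moreover have "0 \<le> quad_form D C (\<lambda>i. x i - y i)" using psd unfolding psd_on_def by simp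
  ultimately show ?thesis using quad_form_diff[OF sym, of x y] cross by simp
qed

lemma psd_on_schur_complement:
  fixes Ph C :: "nat \<Rightarrow> nat \<Rightarrow> real" and K D :: "nat set"
  defines "V \<equiv> \<lambda>p q. \<Sum>a\<in>K. \<Sum>b\<in>K. Ph p a * C a b * Ph q b"
  assumes fin: "finite D" and KD: "K \<subseteq> D" and psd: "psd_on D C" and pd: "pd_on {..<r} V"
  shows "psd_on D (\<lambda>i l. C i l
    - (\<Sum>a\<in>K. \<Sum>b\<in>K. C i a * (\<Sum>p<r. \<Sum>q<r. Ph p a * minv r V p q * Ph q b) * C l b))"
proof -
  define Vi where "Vi = minv r V"
  have inv: "is_inv r V Vi" unfolding Vi_def using is_inv_minv[OF pd] .
  have "sym_on {..<r} Vi" using sym_on_inverse[OF inv] pd unfolding pd_on_def by simp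
  define G where "G = (\<lambda>a b. \<Sum>p<r. \<Sum>q<r. Ph p a * Vi p q * Ph q b)"
  define cr where "cr = (\<lambda>i l. \<Sum>a\<in>K. \<Sum>b\<in>K. C i a * G a b * C l b)"
  have "sym_on K G" unfolding G_def using sym_on_congruence[OF \<open>sym_on {..<r} Vi\<close>] .
  then have "sym_on D cr" unfolding cr_def by (rule sym_on_congruence)
  then have sym: "sym_on D (\<lambda>i l. C i l - cr i l)"
    using psd unfolding psd_on_def sym_on_def by simp
  have "0 \<le> quad_form D (\<lambda>i l. C i l - cr i l) x" for x
  proof -
    define v where "v = (\<lambda>p. \<Sum>a\<in>K. (\<Sum>i\<in>D. x i * C i a) * Ph p a)"
    have "quad_form D cr x = quad_form {..<r} Vi v"
      unfolding cr_def G_def v_def by (simp only: quad_form_congruence)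
    moreover have "(\<Sum>p<r. (\<Sum>q<r. Vi p q * v q) * v p) = quad_form {..<r} Vi v"
      unfolding quad_form_def by (simp add: sum_distrib_left sum_distrib_right mult_ac)
    moreover have "2 * (\<Sum>p<r. (\<Sum>q<r. Vi p q * v q) * v p)
        \<le> quad_form D C x + quad_form {..<r} V (\<lambda>p. \<Sum>q<r. Vi p q * v q)"
      using psd_on_cross_term_bound[OF fin KD psd] unfolding V_def v_def .
    moreover have "quad_form D (\<lambda>i l. C i l - cr i l) x = quad_form D C x - quad_form D cr x"
      unfolding quad_form_def by (simp add: algebra_simps sum_subtractf)
    ultimately show ?thesis using is_inv_quad_form[OF inv] by simp
  qed
  then show ?thesis using sym unfolding psd_on_def cr_def G_def Vi_def by blast
qed

subsection \<open>Unfolding the MRA-lp recursion\<close>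

lemma Wtab_eq_mraW: "length js \<le> m \<Longrightarrow> Wtab S K Phi rp m js = mraW S K Phi rp js"
proof (induction m)
  case 0
  then show ?case by (simp add: mraW_def)
next
  case (Suc m)
  show ?case
  proof (cases "length js \<le> m")
    case True
    then show ?thesis using Suc.IH by simp
  next
    case False
    then have "length js = Suc m" using Suc.prems by simp
    then show ?thesis by (simp add: mraW_def)
  qed
qed

lemma mraW_eq:
  "mraW S K Phi rp js = (\<lambda>i l. S i l
    - (\<Sum>k<length js. corr K Phi rp (mraW S K Phi rp (take k js)) (take k js) i l))"
proof (cases "length js")
  case 0
  then show ?thesis unfolding mraW_def by simp
next
  case (Suc m)
  have prefix: "Wtab S K Phi rp m (take k js) = mraW S K Phi rp (take k js)"
    if "k \<in> {..<length js}" for k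
    using that Suc by (intro Wtab_eq_mraW) simp
  have "mraW S K Phi rp js = Wtab S K Phi rp (Suc m) js"
    using Suc by (simp only: mraW_def)
  also have "\<dots> = (\<lambda>i l. S i l
      - (\<Sum>k<length js. corr K Phi rp (Wtab S K Phi rp m (take k js)) (take k js) i l))"
    using Suc by simp
  also have "\<dots> = (\<lambda>i l. S i l
      - (\<Sum>k<length js. corr K Phi rp (mraW S K Phi rp (take k js)) (take k js) i l))"
    using prefix by (intro ext arg_cong2[where f = "(-)"] refl sum.cong) simp_all
  finally show ?thesis .
qed

lemma mraW_Nil: "mraW S K Phi rp [] = S"
  unfolding mraW_def by simp

lemma mraW_snoc:
  "mraW S K Phi rp (js @ [j])
    = (\<lambda>i l. mraW S K Phi rp js i l - corr K Phi rp (mraW S K Phi rp js) js i l)"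
proof (intro ext)
  fix i l
  let ?c = "\<lambda>ks. corr K Phi rp (mraW S K Phi rp ks) ks i l"
  have "(\<Sum>k<length (js @ [j]). ?c (take k (js @ [j]))) = (\<Sum>k<length js. ?c (take k js)) + ?c js"
    by (simp add: take_append)
  then show "mraW S K Phi rp (js @ [j]) i l = mraW S K Phi rp js i l - ?c js"
    by (subst (1 2) mraW_eq) simp
qed

lemma midx_0: "midx J 0 = {[]}"
  unfolding midx_def by auto

lemma midx_SucE:
  assumes "js \<in> midx J (Suc m)"
  obtains ks j where "js = ks @ [j]" "ks \<in> midx J m" "j \<in> {1..J (Suc m)}"
proof
  have len: "length js = Suc m" and bounds: "\<forall>i<Suc m. 1 \<le> js ! i \<and> js ! i \<le> J (Suc i)"
    using assms unfolding midx_def by auto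
  then show "js = butlast js @ [last js]" by (metis append_butlast_last_id list.size(3) nat.simps(3))
  show "butlast js \<in> midx J m" unfolding midx_def using len bounds by (auto simp: nth_butlast)
  have "js \<noteq> []" using len by auto
  then have "last js = js ! m" using len by (simp add: last_conv_nth)
  then show "last js \<in> {1..J (Suc m)}" using bounds by simp
qed

lemma midx_nested_subset_root:
  assumes nested: "\<And>m ks j. m < M \<Longrightarrow> ks \<in> midx J m \<Longrightarrow> j \<in> {1..J (Suc m)}
      \<Longrightarrow> I (ks @ [j]) \<subseteq> I ks"
    and "m \<le> M" and "js \<in> midx J m"
  shows "I js \<subseteq> I []"
  using \<open>m \<le> M\<close> \<open>js \<in> midx J m\<close>
proof (induction m arbitrary: js)
  case 0
  then show ?case by (simp add: midx_0)
next
  case (Suc m)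
  from Suc.prems(2) obtain ks j
    where "js = ks @ [j]" "ks \<in> midx J m" "j \<in> {1..J (Suc m)}" by (rule midx_SucE)
  then show ?case using nested[of m ks j] Suc.IH[of ks] Suc.prems(1) by auto
qed

lemma mra_psd_and_vhat_pd:
  assumes fin: "finite D" and S_pd: "pd_on D S"
    and K_sub: "\<And>m js. m \<le> M \<Longrightarrow> js \<in> midx J m \<Longrightarrow> K js \<subseteq> D"
    and rank: "\<And>m js y. m \<le> M \<Longrightarrow> js \<in> midx J m
      \<Longrightarrow> \<forall>l\<in>K js. (\<Sum>p<rp js. y p * Phi js p l) = 0 \<Longrightarrow> \<forall>p<rp js. y p = 0"
    and range: "\<And>m js. m \<in> {1..M} \<Longrightarrow> js \<in> midx J m
      \<Longrightarrow> col_space (\<lambda>l p. Phi js p l) (K js) {..<rp js}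
          \<inter> ortho_compl (K js) (col_space (mraW S K Phi rp js) (K js) (K js)) = {\<lambda>_. 0}"
    and "m \<le> M" and "js \<in> midx J m"
  shows "psd_on D (mraW S K Phi rp js) \<and> pd_on {..<rp js} (mraVhat S K Phi rp js)"
  using \<open>m \<le> M\<close> \<open>js \<in> midx J m\<close>
proof (induction m arbitrary: js)
  case 0
  then have "js = []" by (simp add: midx_0)
  have "pd_on (K []) S" using pd_on_subset[OF fin K_sub S_pd, of 0 "[]"] by (simp add: midx_0)
  have "pd_on {..<rp []} (mraVhat S K Phi rp [])"
    unfolding mraVhat_def vhat_def mraW_Nil
  proof (rule pd_on_congruence)
    show "psd_on (K []) S" using pd_on_imp_psd_on[OF \<open>pd_on (K []) S\<close>] .
    show "\<forall>p<rp []. y p = 0" if "\<forall>l\<in>K []. (\<Sum>p<rp []. y p * Phi [] p l) = 0" for y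
      using rank[of 0 "[]"] that by (simp add: midx_0)
    show "\<forall>l\<in>K []. x l = 0" if "quad_form (K []) S x = 0" for x
      using \<open>pd_on (K []) S\<close> that unfolding pd_on_def by force
  qed
  then show ?case using \<open>js = []\<close> pd_on_imp_psd_on[OF S_pd] by (simp add: mraW_Nil)
next
  case (Suc m)
  from Suc.prems(2) obtain ks j where js: "js = ks @ [j]" and ks: "ks \<in> midx J m"
    by (rule midx_SucE)
  have IH: "psd_on D (mraW S K Phi rp ks)" "pd_on {..<rp ks} (mraVhat S K Phi rp ks)"
    using Suc.IH Suc.prems(1) ks by auto
  have "K ks \<subseteq> D" using K_sub[of m ks] Suc.prems(1) ks by simp
  have psdW: "psd_on D (mraW S K Phi rp js)"
    unfolding js mraW_snoc corr_def Let_def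
    using psd_on_schur_complement[OF fin \<open>K ks \<subseteq> D\<close> IH(1)] IH(2)
    unfolding mraVhat_def vhat_def by simp
  have psdK: "psd_on (K js) (mraW S K Phi rp js)"
    using psd_on_subset[OF fin K_sub psdW] Suc.prems by blast
  have "pd_on {..<rp js} (mraVhat S K Phi rp js)"
    unfolding mraVhat_def vhat_def
  proof (rule pd_on_congruence[OF psdK])
    show "\<forall>p<rp js. y p = 0" if "\<forall>l\<in>K js. (\<Sum>p<rp js. y p * Phi js p l) = 0" for y
      using rank that Suc.prems by blast
    fix x assume x: "x \<in> col_space (\<lambda>l p. Phi js p l) (K js) {..<rp js}"
      and "quad_form (K js) (mraW S K Phi rp js) x = 0"
    then have "x \<in> ortho_compl (K js) (col_space (mraW S K Phi rp js) (K js) (K js))"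
      using psd_on_quad_form_eq_0_imp_ortho_compl[OF psdK] unfolding col_space_def by blast
    then have "x = (\<lambda>_. 0)" using range[of "Suc m" js] x Suc.prems by auto
    then show "\<forall>l\<in>K js. x l = 0" by simp
  qed
  with psdW show ?case by simp
qed


theorem proposition1:
  fixes n M :: nat
    and J :: "nat \<Rightarrow> nat"
    and I K :: "nat list \<Rightarrow> nat set"
    and Phi :: "nat list \<Rightarrow> nat \<Rightarrow> nat \<Rightarrow> real"
    and rp :: "nat list \<Rightarrow> nat"
    and Sigma :: "nat \<Rightarrow> nat \<Rightarrow> real"
  assumes n_pos: "n \<ge> 1"
    and J_ge2: "\<forall>i\<in>{1..M}. J i \<ge> 2"
    and I_root: "I [] = {1..n}"
    and I_union: "\<forall>m<M. \<forall>js\<in>midx J m.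
        I js = (\<Union>j\<in>{1..J (Suc m)}. I (js @ [j]))"
    and I_disj: "\<forall>m<M. \<forall>js\<in>midx J m. \<forall>j1\<in>{1..J (Suc m)}. \<forall>j2\<in>{1..J (Suc m)}.
        j1 \<noteq> j2 \<longrightarrow> I (js @ [j1]) \<inter> I (js @ [j2]) = {}"
    and I_order: "\<forall>is\<in>midx J M. \<forall>js\<in>midx J M.
        (is, js) \<in> lex {(a, b). a < b} \<longrightarrow> (\<forall>a\<in>I js. \<forall>b\<in>I is. b < a)"
    and K_sub: "\<forall>m\<le>M. \<forall>js\<in>midx J m. K js \<subseteq> I js"
    and rp_bounds: "\<forall>m\<le>M. \<forall>js\<in>midx J m. 1 \<le> rp js \<and> rp js \<le> card (K js)"
    and Phi_rank: "\<forall>m\<le>M. \<forall>js\<in>midx J m. \<forall>y::nat \<Rightarrow> real.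
        (\<forall>l\<in>K js. (\<Sum>p<rp js. y p * Phi js p l) = 0) \<longrightarrow> (\<forall>p<rp js. y p = 0)"
    and Phi_norm: "\<forall>m\<le>M. \<forall>js\<in>midx J m. \<forall>p<rp js. (\<Sum>l\<in>K js. (Phi js p l)\<^sup>2) = 1"
    and Sigma_pd: "pd_on {1..n} Sigma"
    and range_cond: "\<forall>m\<in>{1..M}. \<forall>js\<in>midx J m.
        col_space (\<lambda>l p. Phi js p l) (K js) {..<rp js}
          \<inter> ortho_compl (K js) (col_space (mraW Sigma K Phi rp js) (K js) (K js))
        = {\<lambda>_. 0}"
  shows "(\<forall>m\<in>{1..M}. \<forall>js\<in>midx J m. psd_on (K js) (mraW Sigma K Phi rp js))
       \<and> (\<forall>m\<le>M. \<forall>js\<in>midx J m. pd_on {..<rp js} (mraVhat Sigma K Phi rp js))"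
proof -
  have K_grid: "K js \<subseteq> {1..n}" if "m \<le> M" "js \<in> midx J m" for m js
  proof -
    have "I js \<subseteq> I []"
      by (rule midx_nested_subset_root[OF _ that]) (use I_union in fastforce)
    then show ?thesis using I_root K_sub that by blast
  qed
  have "psd_on {1..n} (mraW Sigma K Phi rp js) \<and> pd_on {..<rp js} (mraVhat Sigma K Phi rp js)"
    if "m \<le> M" "js \<in> midx J m" for m js
    by (rule mra_psd_and_vhat_pd[OF finite_atLeastAtMost Sigma_pd K_grid _ _ that])
      (use Phi_rank range_cond in blast)+
  then show ?thesis using psd_on_subset[OF _ K_grid] by auto
qed

end
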